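(* Let $\mathbb N$ be a 2-connected symmetric directed graph on $m\ge2$ vertices without self-arcs, and suppose the matrices satisfy $C_{ij}=C_{ji}$ for every pair of arcs $(i,j),(j,i)$; write $\mathcal K_{\{i,j\}}=\ker C_{ij}=\ker C_{ji}$. Let $\mathrm D$ be a symmetric ear decomposition of $\mathbb N$. If for every symmetric ear $\mathbb E\in\mathrm D$ the family $\{\mathcal K_{\{i,j\}}:\{i,j\}\text{ a two-length cycle of }\mathbb E\}$ (indexed by the two-length cycles of $\mathbb E$) is independent, then $\bar{\mathbb N}$ is well-configured. Moreover, if $\max_{\mathbb E\in\mathrm D} l(\mathbb E)\le n$, then there exist matrices with $C_{ij}=C_{ji}$ and $\ker C_{ij}\neq 0$ for all arcs such that $\bar{\mathbb N}$ is well-configured.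
   Context: A directed graph is symmetric if whenever $(i,j)$ is an arc so is $(j,i)$; a two-length cycle is such a pair of arcs $\{(i,j),(j,i)\}$. A symmetric directed graph is $k$-connected if after removing any $k-1$ two-length cycles (both arcs of each) the resulting graph is still strongly connected. Setup: $m$ agents with states $x_i\in\mathbb R^n$; each arc $(j,i)$ carries a real matrix $C_{ji}$ with $n$ columns; $\bar{\mathbb N}$ is well-configured if for all $x_1,\dots,x_m\in\mathbb R^n$, $C_{ji}x_i=C_{ji}x_j$ for every arc $(j,i)$ implies $x_1=\cdots=x_m$. A finite indexed family of subspaces $\{\mathcal S_1,\dots,\mathcal S_p\}$ is independent if $\mathcal S_i\cap\sum_{j\ne i}\mathcal S_j=0$ for every $i$. A symmetric directed path has distinct vertices $v_0,\dots,v_k$ ($k\ge1$) and exactly the arcs $(v_{r-1},v_r),(v_r,v_{r-1})$, $r=1,\dots,k$; its end-vertices are $v_0,v_k$. A symmetric directed cycle has distinct vertices $v_1,\dots,v_k$ ($k\ge3$) and exactly the arcs $(v_r,v_{r+1}),(v_{r+1},v_r)$ for $r=1,\dots,k$ (indices mod $k$). A symmetric ear decomposition of a symmetric directed graph $\mathbb G$ is a sequence $\mathbb E_0,\dots,\mathbb E_p$ of subgraphs where $\mathbb E_0$ is a symmetric directed cycle, each $\mathbb E_i$ ($i\ge1$) is a symmetric directed path or symmetric directed cycle, the $\mathbb E_i$ are pairwise arc-disjoint with union $\mathbb G$, and for $i\ge1$: a symmetric cycle $\mathbb E_i$ has exactly one vertex in common with $\bigcup_{k<i}\mathbb E_k$,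 and a symmetric path $\mathbb E_i$ has its two end-vertices as the only vertices in common with $\bigcup_{k<i}\mathbb E_k$. The length $l(\mathbb E)$ of a symmetric ear is its number of two-length cycles. *)

theory Defs
  imports "Jordan_Normal_Form.Matrix_Kernel"
begin

definition sym_digraph :: "'v set \<Rightarrow> ('v \<times> 'v) set \<Rightarrow> bool" where
  "sym_digraph V A \<longleftrightarrow> finite V \<and> A \<subseteq> V \<times> V \<and> sym A"

definition no_self_arcs :: "('v \<times> 'v) set \<Rightarrow> bool" where
  "no_self_arcs A \<longleftrightarrow> (\<forall>i. (i, i) \<notin> A)"

definition strongly_connected :: "'v set \<Rightarrow> ('v \<times> 'v) set \<Rightarrow> bool" where
  "strongly_connected V A \<longleftrightarrow> (\<forall>i\<in>V. \<forall>j\<in>V. (i, j) \<in> A\<^sup>*)"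

(* two-length cycles {(i,j),(j,i)} of an arc set, represented as the unordered pair {i,j} *)
definition two_cycles :: "('v \<times> 'v) set \<Rightarrow> 'v set set" where
  "two_cycles A = {{i, j} | i j. (i, j) \<in> A}"

definition remove_two_cycles :: "('v \<times> 'v) set \<Rightarrow> 'v set set \<Rightarrow> ('v \<times> 'v) set" where
  "remove_two_cycles A R = {(i, j). (i, j) \<in> A \<and> {i, j} \<notin> R}"

definition k_connected :: "nat \<Rightarrow> 'v set \<Rightarrow> ('v \<times> 'v) set \<Rightarrow> bool" where
  "k_connected k V A \<longleftrightarrow>
     (\<forall>R. R \<subseteq> two_cycles A \<and> card R \<le> k - 1 \<longrightarrow> strongly_connected V (remove_two_cycles A R))"

definition path_arcs :: "'v list \<Rightarrow> ('v \<times> 'v) set" where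
  "path_arcs vs = {(vs ! r, vs ! Suc r) | r. Suc r < length vs}
                \<union> {(vs ! Suc r, vs ! r) | r. Suc r < length vs}"

definition cycle_arcs :: "'v list \<Rightarrow> ('v \<times> 'v) set" where
  "cycle_arcs vs = {(vs ! r, vs ! (Suc r mod length vs)) | r. r < length vs}
                 \<union> {(vs ! (Suc r mod length vs), vs ! r) | r. r < length vs}"

definition is_sym_path :: "'v set \<times> ('v \<times> 'v) set \<Rightarrow> 'v list \<Rightarrow> bool" where
  "is_sym_path E vs \<longleftrightarrow> distinct vs \<and> length vs \<ge> 2 \<and> fst E = set vs \<and> snd E = path_arcs vs"

definition is_sym_cycle :: "'v set \<times> ('v \<times> 'v) set \<Rightarrow> 'v list \<Rightarrow> bool" where
  "is_sym_cycle E vs \<longleftrightarrow> distinct vs \<and> length vs \<ge> 3 \<and> fst E = set vs \<and> snd E = cycle_arcs vs"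

definition sym_ear_decomposition ::
  "'v set \<Rightarrow> ('v \<times> 'v) set \<Rightarrow> ('v set \<times> ('v \<times> 'v) set) list \<Rightarrow> bool" where
  "sym_ear_decomposition V A D \<longleftrightarrow>
     D \<noteq> [] \<and>
     (\<exists>vs. is_sym_cycle (D ! 0) vs) \<and>
     (\<forall>i < length D. 0 < i \<longrightarrow>
        (let prev = (\<Union>k<i. fst (D ! k)) in
          (\<exists>vs. is_sym_cycle (D ! i) vs \<and> card (fst (D ! i) \<inter> prev) = 1) \<or>
          (\<exists>vs. is_sym_path (D ! i) vs \<and> fst (D ! i) \<inter> prev = {hd vs, last vs}))) \<and>
     (\<forall>i < length D. \<forall>j < length D. i \<noteq> j \<longrightarrow> snd (D ! i) \<inter> snd (D ! j) = {}) \<and>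
     (\<Union>E\<in>set D. fst E) = V \<and>
     (\<Union>E\<in>set D. snd E) = A"

definition ear_length :: "'v set \<times> ('v \<times> 'v) set \<Rightarrow> nat" where
  "ear_length E = card (two_cycles (snd E))"

(* well-configured: C j i is the matrix carried by arc (j,i); states are vectors in R^n *)
definition well_configured :: "'v set \<Rightarrow> ('v \<times> 'v) set \<Rightarrow> nat \<Rightarrow> ('v \<Rightarrow> 'v \<Rightarrow> real mat) \<Rightarrow> bool" where
  "well_configured V A n C \<longleftrightarrow>
     (\<forall>x :: 'v \<Rightarrow> real vec. (\<forall>i\<in>V. x i \<in> carrier_vec n) \<longrightarrow>
        (\<forall>(j, i)\<in>A. C j i *\<^sub>v x i = C j i *\<^sub>v x j) \<longrightarrow>
        (\<forall>i\<in>V. \<forall>j\<in>V. x i = x j))"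

definition subspace_sum :: "nat \<Rightarrow> 'i set \<Rightarrow> ('i \<Rightarrow> real vec set) \<Rightarrow> real vec set" where
  "subspace_sum n I S = {finsum_vec TYPE(real) n f I | f. \<forall>j\<in>I. f j \<in> S j}"

definition independent_subspaces :: "nat \<Rightarrow> 'i set \<Rightarrow> ('i \<Rightarrow> real vec set) \<Rightarrow> bool" where
  "independent_subspaces n I S \<longleftrightarrow> (\<forall>i\<in>I. S i \<inter> subspace_sum n (I - {i}) S = {0\<^sub>v n})"

(* K_{i,j} = ker C_ij (= ker C_ji under the symmetry hypothesis), indexed by the two-length cycle {i,j} *)
definition cycle_kernel :: "('v \<Rightarrow> 'v \<Rightarrow> real mat) \<Rightarrow> 'v set \<Rightarrow> real vec set" where
  "cycle_kernel C e = (\<Inter>{mat_kernel (C i j) | i j. e = {i, j}})"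

end

theory Submission
  imports Defs
begin

text \<open>If \<open>x\<close> satisfies \<open>C\<^sub>j\<^sub>i x\<^sub>i = C\<^sub>j\<^sub>i x\<^sub>j\<close> on every arc, then across each two-length
  cycle \<open>{i, j}\<close> the difference \<open>x\<^sub>j - x\<^sub>i\<close> lies in \<open>ker C\<^sub>i\<^sub>j\<close>. Along an ear whose end values
  agree (a cycle, or a path whose end-vertices lie on earlier ears, where \<open>x\<close> is already
  constant) these differences sum to zero, so independence of the ear's kernels forces each
  of them to vanish; induction along the decomposition makes \<open>x\<close> constant.
  Conversely, if every ear has at most \<open>n\<close> two-length cycles, give the cycles of each ear
  distinct coordinates and let \<open>C\<^sub>i\<^sub>j\<close> be the identity with the diagonal entry of that
  coordinate deleted: its kernel is a coordinate axis, and distinct axes are independent.\<close>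

section \<open>Walks, trails and their two-length cycles\<close>

lemma two_cycles_path_arcs:
  "two_cycles (path_arcs ws) = (\<lambda>r. {ws ! r, ws ! Suc r}) ` {..<length ws - 1}"
  unfolding two_cycles_def path_arcs_def by (fastforce simp: insert_commute)

lemma sym_path_arcs: "sym (path_arcs ws)"
  unfolding path_arcs_def sym_def by blast

definition trail :: "'v list \<Rightarrow> bool" where
  "trail ws \<longleftrightarrow> inj_on (\<lambda>r. {ws ! r, ws ! Suc r}) {..<length ws - 1}"

lemma trail_if_distinct:
  assumes "distinct vs"
  shows "trail vs"
  unfolding trail_def
proof (rule inj_onI)
  fix r s assume "r \<in> {..<length vs - 1}" "s \<in> {..<length vs - 1}"
    and "{vs ! r, vs ! Suc r} = {vs ! s, vs ! Suc s}"
  with assms have "r = s \<or> (r = Suc s \<and> Suc r = s)"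
    by (auto simp: doubleton_eq_iff nth_eq_iff_index_eq)
  then show "r = s" by auto
qed

lemma sym_cycle_closed_trail:
  assumes cyc: "is_sym_cycle E vs"
  defines "ws \<equiv> vs @ [hd vs]"
  shows "snd E = path_arcs ws" and "set ws = fst E" and "trail ws" and "hd ws = last ws"
proof -
  define k where "k = length vs"
  have dist: "distinct vs" and k3: "k \<ge> 3" and fE: "fst E = set vs" and sE: "snd E = cycle_arcs vs"
    using cyc unfolding is_sym_cycle_def k_def by auto
  have len: "length ws = Suc k" unfolding ws_def k_def by simp
  have "hd vs = vs ! 0" using k3 unfolding k_def by (intro hd_conv_nth) auto
  \<comment> \<open>the appended copy of the first vertex sits at index \<open>k\<close>, i.e. at \<open>0 mod k\<close>\<close>
  have nth_ws: "ws ! j = vs ! (j mod k)" if "j \<le> k" for j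
    using that \<open>hd vs = vs ! 0\<close> unfolding ws_def k_def
    by (cases "j < length vs") (auto simp: nth_append)
  have nth_Suc: "ws ! r = vs ! r" "ws ! Suc r = vs ! (Suc r mod k)" if "r < k" for r
    using nth_ws[of r] nth_ws[of "Suc r"] that by auto
  have "{(ws ! r, ws ! Suc r) | r. Suc r < length ws}
      = {(vs ! r, vs ! (Suc r mod length vs)) | r. r < length vs}"
    "{(ws ! Suc r, ws ! r) | r. Suc r < length ws}
      = {(vs ! (Suc r mod length vs), vs ! r) | r. r < length vs}"
    using nth_Suc len unfolding k_def by force+
  then have "path_arcs ws = cycle_arcs vs"
    unfolding path_arcs_def cycle_arcs_def by simp
  then show "snd E = path_arcs ws" using sE by simp
  show "set ws = fst E" "hd ws = last ws"
    unfolding ws_def fE using k3 k_def by (cases vs; auto)+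
  show "trail ws"
    unfolding trail_def
  proof (rule inj_onI)
    fix r s assume "r \<in> {..<length ws - 1}" "s \<in> {..<length ws - 1}"
      and eq: "{ws ! r, ws ! Suc r} = {ws ! s, ws ! Suc s}"
    then have r: "r < k" and s: "s < k" using len by auto
    have "Suc r mod k < k" "Suc s mod k < k" using k3 by auto
    with eq dist r s have "r = s \<or> (r = Suc s mod k \<and> Suc r mod k = s)"
      unfolding nth_Suc[OF r] nth_Suc[OF s] k_def
      by (auto simp: doubleton_eq_iff nth_eq_iff_index_eq)
    moreover have "\<not> (r = Suc s mod k \<and> Suc r mod k = s)"
    proof
      have Suc_mod: "Suc j mod k = (if Suc j = k then 0 else Suc j)" if "j < k" for j
        using that by (cases "Suc j = k") auto
      assume "r = Suc s mod k \<and> Suc r mod k = s"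
      then show False using Suc_mod[OF r] Suc_mod[OF s] k3 by (auto split: if_splits)
    qed
    ultimately show "r = s" by blast
  qed
qed

lemma uminus_mem_mat_kernel:
  fixes M :: "'a :: comm_ring_1 mat"
  assumes v: "v \<in> mat_kernel M"
  shows "- v \<in> mat_kernel M"
proof -
  have "(- 1) \<cdot>\<^sub>v v \<in> mat_kernel M"
    by (rule mat_kernel_smult[OF _ v]) auto
  moreover have "(- 1) \<cdot>\<^sub>v v = - v" by (intro eq_vecI) auto
  ultimately show ?thesis by simp
qed

lemma diff_mem_mat_kernel:
  fixes M :: "'a :: comm_ring_1 mat"
  assumes u: "u \<in> carrier_vec (dim_col M)" and w: "w \<in> carrier_vec (dim_col M)"
    and eq: "M *\<^sub>v u = M *\<^sub>v w"
  shows "u - w \<in> mat_kernel M"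
proof -
  have "M *\<^sub>v (u - w) = M *\<^sub>v u - M *\<^sub>v w"
    by (rule mult_minus_distrib_mat_vec[OF _ u w]) auto
  also have "\<dots> = 0\<^sub>v (dim_row M)" unfolding eq by (intro eq_vecI) auto
  finally show ?thesis unfolding mat_kernel_def using u w by auto
qed

lemma cycle_kernel_arc:
  assumes "(a, b) \<in> A" and "\<forall>(i, j)\<in>A. C i j = C j i"
  shows "cycle_kernel C {a, b} = mat_kernel (C a b)"
proof -
  have "C b a = C a b" using assms by auto
  then have "{mat_kernel (C i j) | i j. {a, b} = {i, j}} = {mat_kernel (C a b)}"
    by (auto simp: doubleton_eq_iff)
  then show ?thesis unfolding cycle_kernel_def by simp
qed

lemma cycle_kernel_arc_closed:
  assumes arc: "(a, b) \<in> A" and Csym: "\<forall>(i, j)\<in>A. C i j = C j i"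
    and cols: "\<forall>(j, i)\<in>A. dim_col (C j i) = n" and v: "v \<in> cycle_kernel C {a, b}"
  shows "v \<in> carrier_vec n \<and> - v \<in> cycle_kernel C {a, b}"
proof -
  have vk: "v \<in> mat_kernel (C a b)" using v cycle_kernel_arc[OF arc Csym] by simp
  have "dim_col (C a b) = n" using cols arc by auto
  then have "v \<in> carrier_vec n" using vk unfolding mat_kernel_def by simp
  moreover have "- v \<in> cycle_kernel C {a, b}"
    using uminus_mem_mat_kernel[OF vk] cycle_kernel_arc[OF arc Csym] by simp
  ultimately show ?thesis ..
qed

section \<open>Independent subspaces\<close>

lemma independent_subspaces_sum_eq_zero:
  fixes d :: "'k \<Rightarrow> real vec" and g :: "'k \<Rightarrow> 'i"
  assumes indep: "independent_subspaces n (g ` K) S"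
    and fin: "finite K" and inj: "inj_on g K"
    and closed: "\<And>k v. k \<in> K \<Longrightarrow> v \<in> S (g k) \<Longrightarrow> v \<in> carrier_vec n \<and> - v \<in> S (g k)"
    and mem: "\<And>k. k \<in> K \<Longrightarrow> d k \<in> S (g k)"
    and sum_zero: "\<And>a. a < n \<Longrightarrow> (\<Sum>k\<in>K. d k $ a) = 0"
    and k: "k \<in> K"
  shows "d k = 0\<^sub>v n"
proof -
  define f where "f e = - d (the_inv_into K g e)" for e
  have f_g: "f (g j) = - d j" if "j \<in> K" for j
    using the_inv_into_f_f[OF inj that] unfolding f_def by simp
  have rest: "g ` K - {g k} = g ` (K - {k})"
    using inj k by (auto simp: inj_on_image_set_diff)
  have dc: "d j \<in> carrier_vec n" if "j \<in> K" for j using closed mem that by blast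
  have fc: "f \<in> g ` (K - {k}) \<rightarrow> carrier_vec n" using f_g dc by auto
  have neg_index: "(- d j) $ a = - (d j $ a)" if "j \<in> K" "a < n" for j a
    using dc[OF that(1)] that(2) by simp
  define w where "w = finsum_vec TYPE(real) n f (g ` K - {g k})"
  have "w \<in> subspace_sum n (g ` K - {g k}) S"
    unfolding subspace_sum_def w_def rest using closed mem f_g by fastforce
  moreover have "d k = w"
  proof (rule eq_vecI)
    fix a assume "a < dim_vec w"
    then have a: "a < n" unfolding w_def using finsum_vec_closed[OF fc] rest by auto
    have "w $ a = (\<Sum>e\<in>g ` (K - {k}). f e $ a)"
      unfolding w_def rest by (rule index_finsum_vec[OF _ a fc]) (use fin in simp)
    also have "\<dots> = (\<Sum>j\<in>K - {k}. - (d j $ a))"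
      using a by (auto simp: sum.reindex inj_on_diff[OF inj] f_g neg_index intro!: sum.cong)
    also have "\<dots> = d k $ a"
      using sum_zero[OF a] sum.remove[OF fin k, of "\<lambda>j. d j $ a"] by (simp add: sum_negf)
    finally show "d k $ a = w $ a" ..
  qed (use dc[OF k] finsum_vec_closed[OF fc] rest w_def in simp)
  ultimately show ?thesis using indep k mem unfolding independent_subspaces_def by auto
qed

lemma zero_mem_subspace_sum:
  assumes "\<And>j. j \<in> I \<Longrightarrow> 0\<^sub>v n \<in> S j"
  shows "0\<^sub>v n \<in> subspace_sum n I S"
proof -
  have "finsum_vec TYPE(real) n (\<lambda>_. 0\<^sub>v n) I = 0\<^sub>v n"
    using comm_monoid.finprod_one[OF comm_monoid_vec, folded finsum_vec_def, unfolded monoid_vec_simps] .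
  then show ?thesis unfolding subspace_sum_def using assms by force
qed

lemma independent_subspaces_distinct_coordinates:
  fixes S :: "'i \<Rightarrow> real vec set"
  assumes fin: "finite I" and inj: "inj_on idx I"
    and zero: "\<And>e. e \<in> I \<Longrightarrow> 0\<^sub>v n \<in> S e"
    and carrier: "\<And>e v. e \<in> I \<Longrightarrow> v \<in> S e \<Longrightarrow> v \<in> carrier_vec n"
    and support: "\<And>e v a. e \<in> I \<Longrightarrow> v \<in> S e \<Longrightarrow> a < n \<Longrightarrow> a \<noteq> idx e \<Longrightarrow> v $ a = 0"
  shows "independent_subspaces n I S"
  unfolding independent_subspaces_def
proof (intro ballI equalityI subsetI)
  fix e and v :: "real vec" assume e: "e \<in> I" and v: "v \<in> S e \<inter> subspace_sum n (I - {e}) S"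
  then obtain f where v_sum: "v = finsum_vec TYPE(real) n f (I - {e})"
    and f: "\<And>j. j \<in> I - {e} \<Longrightarrow> f j \<in> S j"
    unfolding subspace_sum_def by auto
  have fc: "f \<in> I - {e} \<rightarrow> carrier_vec n" using f carrier by blast
  have "v $ a = 0" if a: "a < n" for a
  proof (cases "a = idx e")
    case True
    have "v $ a = (\<Sum>j\<in>I - {e}. f j $ a)"
      unfolding v_sum by (rule index_finsum_vec[OF _ a fc]) (use fin in simp)
    also have "\<dots> = 0"
    proof (intro sum.neutral ballI)
      fix j assume j: "j \<in> I - {e}"
      then have "idx j \<noteq> idx e" using inj e by (auto dest: inj_onD)
      then show "f j $ a = 0" using support f j a True by auto
    qed
    finally show ?thesis .
  qed (use support e v a in auto)
  then have "v = 0\<^sub>v n" using carrier e v by (intro eq_vecI) auto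
  then show "v \<in> {0\<^sub>v n}" by simp
next
  fix e and v :: "real vec" assume "e \<in> I" "v \<in> {0\<^sub>v n}"
  then show "v \<in> S e \<inter> subspace_sum n (I - {e}) S"
    using zero zero_mem_subspace_sum[of "I - {e}" n S] by auto
qed

lemma constant_if_consecutive_eq:
  assumes ne: "ws \<noteq> []" and step: "\<And>r. Suc r < length ws \<Longrightarrow> f (ws ! Suc r) = f (ws ! r)"
  shows "\<forall>v\<in>set ws. f v = f (hd ws)"
proof -
  have all: "f (ws ! r) = f (ws ! 0)" if "r < length ws" for r
    using that by (induction r) (auto simp: step)
  show ?thesis
  proof
    fix v assume "v \<in> set ws"
    then obtain r where "r < length ws" "v = ws ! r" by (auto simp: in_set_conv_nth)
    then show "f v = f (hd ws)" using all[of r] ne by (simp add: hd_conv_nth)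
  qed
qed

lemma constant_on_trail:
  fixes x :: "'v \<Rightarrow> real vec"
  assumes trail: "trail ws" and ne: "ws \<noteq> []"
    and arcs: "path_arcs ws \<subseteq> A"
    and cols: "\<forall>(j, i)\<in>A. dim_col (C j i) = n"
    and Csym: "\<forall>(i, j)\<in>A. C i j = C j i"
    and xcar: "\<forall>v\<in>set ws. x v \<in> carrier_vec n"
    and agree: "\<forall>(j, i)\<in>A. C j i *\<^sub>v x i = C j i *\<^sub>v x j"
    and ends: "x (hd ws) = x (last ws)"
    and indep: "independent_subspaces n (two_cycles (path_arcs ws)) (cycle_kernel C)"
  shows "\<forall>v\<in>set ws. x v = x (hd ws)"
proof -
  define m where "m = length ws - 1"
  define g where "g r = {ws ! r, ws ! Suc r}" for r
  define d where "d r = x (ws ! Suc r) - x (ws ! r)" for r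
  have arc: "(ws ! r, ws ! Suc r) \<in> A" if "r < m" for r
  proof -
    have "Suc r < length ws" using that unfolding m_def by simp
    then show ?thesis using arcs unfolding path_arcs_def by blast
  qed
  have xc: "x (ws ! r) \<in> carrier_vec n" if "r \<le> m" for r
  proof -
    have "r < length ws" using that ne unfolding m_def by (cases ws) auto
    then show ?thesis using xcar nth_mem by blast
  qed
  have d_index: "d r $ a = x (ws ! Suc r) $ a - x (ws ! r) $ a" if "r < m" "a < n" for r a
    unfolding d_def using xc[of r] xc[of "Suc r"] that by simp
  have kernel: "cycle_kernel C (g r) = mat_kernel (C (ws ! r) (ws ! Suc r))" if "r < m" for r
    unfolding g_def using arc[OF that] Csym by (rule cycle_kernel_arc)
  have d_kernel: "d r \<in> cycle_kernel C (g r)" if r: "r < m" for r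
    unfolding kernel[OF r] d_def
    using agree arc[OF r] cols xc[of r] xc[of "Suc r"] r by (intro diff_mem_mat_kernel) auto
  \<comment> \<open>the differences along the trail telescope to \<open>x (last ws) - x (hd ws) = 0\<close>\<close>
  have telescope: "(\<Sum>r<m. d r $ a) = 0" if a: "a < n" for a
  proof -
    have "(\<Sum>r<m. d r $ a) = (\<Sum>r<m. x (ws ! Suc r) $ a - x (ws ! r) $ a)"
      using d_index a by simp
    also have "\<dots> = x (ws ! m) $ a - x (ws ! 0) $ a" by (rule sum_lessThan_telescope)
    also have "\<dots> = 0" using ends ne by (simp add: m_def hd_conv_nth last_conv_nth)
    finally show ?thesis .
  qed
  have step: "x (ws ! Suc r) = x (ws ! r)" if r: "r < m" for r
  proof -
    have "d r = 0\<^sub>v n"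
    proof (rule independent_subspaces_sum_eq_zero[of n g "{..<m}" "cycle_kernel C"])
      show "independent_subspaces n (g ` {..<m}) (cycle_kernel C)"
        using indep unfolding two_cycles_path_arcs g_def m_def .
      show "inj_on g {..<m}" using trail unfolding trail_def g_def m_def .
      show "v \<in> carrier_vec n \<and> - v \<in> cycle_kernel C (g k)"
        if "k \<in> {..<m}" "v \<in> cycle_kernel C (g k)" for k v
        using cycle_kernel_arc_closed[OF arc Csym cols] that unfolding g_def by simp
    qed (use d_kernel telescope r in simp_all)
    then have "x (ws ! Suc r) $ a = x (ws ! r) $ a" if "a < n" for a
      using d_index[OF r that] that by simp
    then show ?thesis using xc[of r] xc[of "Suc r"] r by (intro eq_vecI) auto
  qed
  show ?thesis using ne step unfolding m_def by (intro constant_if_consecutive_eq) auto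
qed

section \<open>Symmetric ear decompositions\<close>

lemma sym_ear_decompositionD:
  assumes "sym_ear_decomposition V A D"
  shows "D \<noteq> []" and "\<exists>vs. is_sym_cycle (D ! 0) vs"
    and "\<And>i. i < length D \<Longrightarrow> 0 < i \<Longrightarrow>
           (\<exists>vs. is_sym_cycle (D ! i) vs \<and> card (fst (D ! i) \<inter> (\<Union>k<i. fst (D ! k))) = 1) \<or>
           (\<exists>vs. is_sym_path (D ! i) vs \<and> fst (D ! i) \<inter> (\<Union>k<i. fst (D ! k)) = {hd vs, last vs})"
    and "\<And>i j. i < length D \<Longrightarrow> j < length D \<Longrightarrow> i \<noteq> j \<Longrightarrow> snd (D ! i) \<inter> snd (D ! j) = {}"
    and "(\<Union>E\<in>set D. fst E) = V" and "(\<Union>E\<in>set D. snd E) = A"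
  using assms unfolding sym_ear_decomposition_def Let_def by blast+

lemma sym_ear_decomposition_ear_arcs:
  assumes "sym_ear_decomposition V A D" and "E \<in> set D"
  shows "\<exists>ws. snd E = path_arcs ws"
proof -
  obtain i where i: "i < length D" and E: "E = D ! i" using assms(2) by (auto simp: in_set_conv_nth)
  have "(\<exists>vs. is_sym_cycle E vs) \<or> (\<exists>vs. is_sym_path E vs)"
    using sym_ear_decompositionD(2)[OF assms(1)] sym_ear_decompositionD(3)[OF assms(1) i] E
    by (cases "i = 0") blast+
  then show ?thesis using sym_cycle_closed_trail(1) unfolding is_sym_path_def by blast
qed

lemma sym_ear_decomposition_two_cycles_disjoint:
  assumes ear: "sym_ear_decomposition V A D"
  shows "disjoint_family_on (\<lambda>E. two_cycles (snd E)) (set D)"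
  unfolding disjoint_family_on_def
proof (intro ballI impI equals0I)
  fix E1 E2 e assume E1: "E1 \<in> set D" and E2: "E2 \<in> set D" and "E1 \<noteq> E2"
    and "e \<in> two_cycles (snd E1) \<inter> two_cycles (snd E2)"
  then obtain a b c d where ab: "(a, b) \<in> snd E1" and cd: "(c, d) \<in> snd E2"
    and "{a, b} = {c, d}" unfolding two_cycles_def by auto
  moreover have "sym (snd E2)"
    using sym_ear_decomposition_ear_arcs[OF ear E2] sym_path_arcs by auto
  ultimately have "(a, b) \<in> snd E1 \<inter> snd E2" by (auto simp: doubleton_eq_iff dest: symD)
  moreover obtain i j where "i < length D" "j < length D" "E1 = D ! i" "E2 = D ! j"
    using E1 E2 by (auto simp: in_set_conv_nth)
  ultimately show False using sym_ear_decompositionD(4)[OF ear] \<open>E1 \<noteq> E2\<close> by blast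
qed

lemma constant_on_sym_ear_decomposition:
  assumes ear: "sym_ear_decomposition V A D"
    and cycle: "\<And>E vs. E \<in> set D \<Longrightarrow> is_sym_cycle E vs \<Longrightarrow> \<exists>c. \<forall>v\<in>fst E. f v = c"
    and path: "\<And>E vs. E \<in> set D \<Longrightarrow> is_sym_path E vs \<Longrightarrow> f (hd vs) = f (last vs) \<Longrightarrow>
                 \<forall>v\<in>fst E. f v = f (hd vs)"
  shows "\<exists>c. \<forall>v\<in>V. f v = c"
proof -
  note ear_facts = sym_ear_decompositionD[OF ear]
  obtain vs0 where vs0: "is_sym_cycle (D ! 0) vs0" using ear_facts(2) by blast
  have "D ! 0 \<in> set D" using ear_facts(1) by simp
  then obtain c where c: "\<forall>v\<in>fst (D ! 0). f v = c" using cycle[OF _ vs0] by blast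
  \<comment> \<open>each new ear meets the earlier ones, where \<open>f\<close> is already constant, in one vertex
    (cycle) or in both end-vertices (path)\<close>
  have ears: "\<forall>v\<in>fst (D ! i). f v = c" if "i < length D" for i
    using that
  proof (induction i rule: less_induct)
    case (less i)
    show ?case
    proof (cases "i = 0")
      case False
      define prev where "prev = (\<Union>k<i. fst (D ! k))"
      have prev_c: "\<forall>v\<in>prev. f v = c" unfolding prev_def using less by auto
      have Ei: "D ! i \<in> set D" using less by auto
      from ear_facts(3)[OF less(2)] False consider
        vs where "is_sym_cycle (D ! i) vs" "card (fst (D ! i) \<inter> prev) = 1" |
        vs where "is_sym_path (D ! i) vs" "fst (D ! i) \<inter> prev = {hd vs, last vs}"
        unfolding prev_def by blast
      then show ?thesis
      proof cases
        case (1 vs)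
        then obtain w where w: "w \<in> fst (D ! i)" "w \<in> prev" by (auto simp: card_Suc_eq)
        obtain c' where c': "\<forall>v\<in>fst (D ! i). f v = c'" using cycle[OF Ei 1(1)] by blast
        then have "c' = c" using w prev_c by auto
        then show ?thesis using c' by simp
      next
        case (2 vs)
        then have "f (hd vs) = c" "f (last vs) = c" using prev_c by auto
        then show ?thesis using path[OF Ei 2(1)] by auto
      qed
    qed (use c in simp)
  qed
  have "\<forall>v\<in>V. f v = c"
  proof
    fix v assume "v \<in> V"
    then obtain E where "E \<in> set D" "v \<in> fst E" using ear_facts(5) by blast
    then obtain i where "i < length D" "v \<in> fst (D ! i)" by (auto simp: in_set_conv_nth)
    then show "f v = c" using ears by blast
  qed
  then show ?thesis ..
qed

lemma well_configured_if_ear_kernels_independent: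
  fixes C :: "'v \<Rightarrow> 'v \<Rightarrow> real mat"
  assumes cols: "\<forall>(j, i)\<in>A. dim_col (C j i) = n"
    and Csym: "\<forall>(i, j)\<in>A. C i j = C j i"
    and ear: "sym_ear_decomposition V A D"
    and indep: "\<forall>E\<in>set D. independent_subspaces n (two_cycles (snd E)) (cycle_kernel C)"
  shows "well_configured V A n C"
  unfolding well_configured_def
proof (intro allI impI)
  fix x :: "'v \<Rightarrow> real vec"
  assume xcar: "\<forall>i\<in>V. x i \<in> carrier_vec n"
    and agree: "\<forall>(j, i)\<in>A. C j i *\<^sub>v x i = C j i *\<^sub>v x j"
  note ear_facts = sym_ear_decompositionD[OF ear]
  have trail_ear: "\<forall>v\<in>set ws. x v = x (hd ws)"
    if E: "E \<in> set D" and ws: "snd E = path_arcs ws" "set ws = fst E" "trail ws"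
      and ends: "x (hd ws) = x (last ws)" and ne: "ws \<noteq> []" for E ws
  proof (rule constant_on_trail[OF ws(3) ne _ cols Csym _ agree ends])
    show "path_arcs ws \<subseteq> A" using E ws(1) ear_facts(6) by blast
    show "\<forall>v\<in>set ws. x v \<in> carrier_vec n" using E ws(2) ear_facts(5) xcar by blast
    show "independent_subspaces n (two_cycles (path_arcs ws)) (cycle_kernel C)"
      using indep E unfolding ws(1)[symmetric] by blast
  qed
  have "\<exists>c. \<forall>v\<in>V. x v = c"
  proof (rule constant_on_sym_ear_decomposition[OF ear])
    fix E vs assume E: "E \<in> set D" and cyc: "is_sym_cycle E vs"
    note closed = sym_cycle_closed_trail[OF cyc]
    have "\<forall>v\<in>set (vs @ [hd vs]). x v = x (hd (vs @ [hd vs]))"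
      using closed(4) by (intro trail_ear[OF E closed(1-3)]) auto
    then show "\<exists>c. \<forall>v\<in>fst E. x v = c" using closed(2) by blast
  next
    fix E vs assume E: "E \<in> set D" and path: "is_sym_path E vs" and ends: "x (hd vs) = x (last vs)"
    have vs: "distinct vs" "2 \<le> length vs" "fst E = set vs" "snd E = path_arcs vs"
      using path unfolding is_sym_path_def by auto
    have "vs \<noteq> []" using vs(2) by auto
    with E ends vs have "\<forall>v\<in>set vs. x v = x (hd vs)"
      by (intro trail_ear trail_if_distinct) auto
    then show "\<forall>v\<in>fst E. x v = x (hd vs)" using vs(3) by simp
  qed
  then show "\<forall>i\<in>V. \<forall>j\<in>V. x i = x j" by auto
qed

section \<open>A configuration realising the bound\<close>

definition coord_drop_mat :: "nat \<Rightarrow> nat \<Rightarrow> real mat" where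
  "coord_drop_mat n k = mat n n (\<lambda>(a, b). if a = b \<and> a \<noteq> k then 1 else 0)"

lemma coord_drop_mat_mult_vec_index:
  assumes v: "v \<in> carrier_vec n" and a: "a < n"
  shows "(coord_drop_mat n k *\<^sub>v v) $ a = (if a = k then 0 else v $ a)"
proof -
  have "(coord_drop_mat n k *\<^sub>v v) $ a = (\<Sum>i<n. (if a = i \<and> a \<noteq> k then 1 else 0) * v $ i)"
    using v a unfolding coord_drop_mat_def by (simp add: scalar_prod_def lessThan_atLeast0)
  also have "\<dots> = (\<Sum>i<n. if i = a then (if a = k then 0 else v $ a) else 0)"
    by (rule sum.cong) auto
  finally show ?thesis using a by simp
qed

lemma mat_kernel_coord_drop_mat:
  "mat_kernel (coord_drop_mat n k) = {v \<in> carrier_vec n. \<forall>a<n. a \<noteq> k \<longrightarrow> v $ a = 0}"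
proof -
  have dims: "dim_col (coord_drop_mat n k) = n" "dim_row (coord_drop_mat n k) = n"
    unfolding coord_drop_mat_def by auto
  have "coord_drop_mat n k *\<^sub>v v = 0\<^sub>v n \<longleftrightarrow> (\<forall>a<n. a \<noteq> k \<longrightarrow> v $ a = 0)"
    if v: "v \<in> carrier_vec n" for v
  proof
    assume "coord_drop_mat n k *\<^sub>v v = 0\<^sub>v n"
    then show "\<forall>a<n. a \<noteq> k \<longrightarrow> v $ a = 0"
      using coord_drop_mat_mult_vec_index[OF v] by (metis index_zero_vec(1))
  next
    assume zero: "\<forall>a<n. a \<noteq> k \<longrightarrow> v $ a = 0"
    show "coord_drop_mat n k *\<^sub>v v = 0\<^sub>v n"
    proof (rule eq_vecI)
      fix a assume "a < dim_vec (0\<^sub>v n :: real vec)"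
      then show "(coord_drop_mat n k *\<^sub>v v) $ a = 0\<^sub>v n $ a"
        using coord_drop_mat_mult_vec_index[OF v] zero by simp
    qed (simp add: dims)
  qed
  then show ?thesis unfolding mat_kernel_def dims by auto
qed

lemma mat_kernel_coord_drop_mat_nontrivial:
  assumes "k < n"
  shows "mat_kernel (coord_drop_mat n k) \<noteq> {0\<^sub>v n}"
proof
  assume "mat_kernel (coord_drop_mat n k) = {0\<^sub>v n}"
  moreover have "unit_vec n k \<in> mat_kernel (coord_drop_mat n k)"
    unfolding mat_kernel_coord_drop_mat using assms by auto
  ultimately have "(unit_vec n k :: real vec) $ k = 0\<^sub>v n $ k" by simp
  then show False using assms by simp
qed

lemma ex_inj_on_disjoint_family:
  assumes disj: "disjoint_family_on T F"
    and fin: "\<And>E. E \<in> F \<Longrightarrow> finite (T E)" and card: "\<And>E. E \<in> F \<Longrightarrow> card (T E) \<le> n"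
  shows "\<exists>idx. \<forall>E\<in>F. inj_on idx (T E) \<and> idx ` T E \<subseteq> {..<n}"
proof -
  have "\<forall>E\<in>F. \<exists>h. inj_on h (T E) \<and> h ` T E \<subseteq> {..<n}"
  proof
    fix E assume E: "E \<in> F"
    obtain h where "bij_betw h (T E) {0..<card (T E)}"
      using ex_bij_betw_finite_nat[OF fin[OF E]] by blast
    then have "inj_on h (T E) \<and> h ` T E \<subseteq> {..<n}"
      using card[OF E] unfolding bij_betw_def by auto
    then show "\<exists>h. inj_on h (T E) \<and> h ` T E \<subseteq> {..<n}" by blast
  qed
  then obtain h where h: "\<And>E. E \<in> F \<Longrightarrow> inj_on (h E) (T E) \<and> h E ` T E \<subseteq> {..<n}"
    by metis
  define idx where "idx e = h (SOME E. E \<in> F \<and> e \<in> T E) e" for e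
  \<comment> \<open>by disjointness the choice of the member containing \<open>e\<close> is forced\<close>
  have "idx e = h E e" if "E \<in> F" "e \<in> T E" for E e
  proof -
    have "(SOME E. E \<in> F \<and> e \<in> T E) = E"
      using that disj by (intro some_equality) (auto simp: disjoint_family_on_def)
    then show ?thesis unfolding idx_def by simp
  qed
  then have "inj_on idx (T E) \<and> idx ` T E \<subseteq> {..<n}" if "E \<in> F" for E
    using h[OF that] that inj_on_cong[of "T E" idx "h E"] by auto
  then show ?thesis by blast
qed

lemma ex_well_configured_nontrivial_kernels:
  assumes ear: "sym_ear_decomposition V A D"
    and short: "Max (ear_length ` set D) \<le> n"
  shows "\<exists>C' :: 'v \<Rightarrow> 'v \<Rightarrow> real mat.
           (\<forall>(j, i)\<in>A. dim_col (C' j i) = n) \<and>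
           (\<forall>(i, j)\<in>A. C' i j = C' j i) \<and>
           (\<forall>(i, j)\<in>A. mat_kernel (C' i j) \<noteq> {0\<^sub>v n}) \<and>
           well_configured V A n C'"
proof -
  define T where "T E = two_cycles (snd E)" for E :: "'v set \<times> ('v \<times> 'v) set"
  have fin: "finite (T E)" if "E \<in> set D" for E
    using sym_ear_decomposition_ear_arcs[OF ear that] unfolding T_def
    by (auto simp: two_cycles_path_arcs)
  have card: "card (T E) \<le> n" if "E \<in> set D" for E
  proof -
    have "ear_length E \<le> Max (ear_length ` set D)" using that by (intro Max_ge) auto
    then show ?thesis using short unfolding T_def ear_length_def by simp
  qed
  have "disjoint_family_on T (set D)"
    using sym_ear_decomposition_two_cycles_disjoint[OF ear] unfolding T_def[abs_def] .
  then obtain idx where idx: "\<And>E. E \<in> set D \<Longrightarrow> inj_on idx (T E) \<and> idx ` T E \<subseteq> {..<n}"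
    using ex_inj_on_disjoint_family[of T "set D" n] fin card by blast
  define C' where "C' i j = coord_drop_mat n (idx {i, j})" for i j
  have cols: "\<forall>(j, i)\<in>A. dim_col (C' j i) = n" unfolding C'_def coord_drop_mat_def by auto
  have Csym: "\<forall>(i, j)\<in>A. C' i j = C' j i" unfolding C'_def by (auto simp: insert_commute)
  have ear_of_arc: "\<exists>E\<in>set D. {i, j} \<in> T E" if "(i, j) \<in> A" for i j
    using that sym_ear_decompositionD(6)[OF ear] unfolding T_def two_cycles_def by blast
  have kernel: "cycle_kernel C' e = mat_kernel (coord_drop_mat n (idx e))"
    if E: "E \<in> set D" and e: "e \<in> T E" for E e
  proof -
    obtain a b where ab: "e = {a, b}" "(a, b) \<in> snd E" using e unfolding T_def two_cycles_def by auto
    then have "(a, b) \<in> A" using E sym_ear_decompositionD(6)[OF ear] by blast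
    then show ?thesis using cycle_kernel_arc[OF _ Csym] ab(1) unfolding C'_def by simp
  qed
  have "independent_subspaces n (T E) (cycle_kernel C')" if E: "E \<in> set D" for E
    using idx[OF E] fin[OF E] kernel[OF E]
    by (intro independent_subspaces_distinct_coordinates[where idx = idx])
      (auto simp: mat_kernel_coord_drop_mat)
  then have "well_configured V A n C'"
  using well_configured_if_ear_kernels_independent[OF cols Csym ear] unfolding T_def by blast
  moreover have "\<forall>(i, j)\<in>A. mat_kernel (C' i j) \<noteq> {0\<^sub>v n}"
  proof (clarify)
    fix i j assume "(i, j) \<in> A"
    then obtain E where "E \<in> set D" "{i, j} \<in> T E" using ear_of_arc by blast
    then have "idx {i, j} < n" using idx by blast
    then show "mat_kernel (C' i j) = {0\<^sub>v n} \<Longrightarrow> False"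
      unfolding C'_def using mat_kernel_coord_drop_mat_nontrivial by blast
  qed
  ultimately show ?thesis using cols Csym by blast
qed

theorem theorem3:
  fixes V :: "'v set" and A :: "('v \<times> 'v) set" and n :: nat
    and C :: "'v \<Rightarrow> 'v \<Rightarrow> real mat"
    and D :: "('v set \<times> ('v \<times> 'v) set) list"
  assumes graph: "sym_digraph V A"
    and noself: "no_self_arcs A"
    and m2: "card V \<ge> 2"
    and conn: "k_connected 2 V A"
    and cols: "\<forall>(j, i)\<in>A. dim_col (C j i) = n"
    and Csym: "\<forall>(i, j)\<in>A. C i j = C j i"
    and ear: "sym_ear_decomposition V A D"
  shows "((\<forall>E\<in>set D. independent_subspaces n (two_cycles (snd E)) (cycle_kernel C))
            \<longrightarrow> well_configured V A n C)
       \<and> (Max (ear_length ` set D) \<le> n \<longrightarrow>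
            (\<exists>C' :: 'v \<Rightarrow> 'v \<Rightarrow> real mat.
               (\<forall>(j, i)\<in>A. dim_col (C' j i) = n) \<and>
               (\<forall>(i, j)\<in>A. C' i j = C' j i) \<and>
               (\<forall>(i, j)\<in>A. mat_kernel (C' i j) \<noteq> {0\<^sub>v n}) \<and>
               well_configured V A n C'))"
  \<comment> \<open>the graph hypotheses only guarantee that an ear decomposition exists; here it is given\<close>
  using well_configured_if_ear_kernels_independent[OF cols Csym ear]
    ex_well_configured_nontrivial_kernels[OF ear]
  by blast

end
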